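(* In $\mathbf{MetCH_{sep}}$, the pushout of a regular monomorphism along any morphism is a regular monomorphism.
   Context: A metric on a set $X$ is a map $d\colon X\times X\to[0,\infty]$ with $d(x,x)=0$ and $d(x,z)\le d(x,y)+d(y,z)$ (not necessarily symmetric, $\infty$ allowed); separated means $d(x,y)=0=d(y,x)$ implies $x=y$. A separated metric compact Hausdorff space is a compact Hausdorff space with a separated metric $d\colon X\times X\to[0,\infty]$ continuous with respect to the upper topology on $[0,\infty]$ (open sets $]u,\infty]$, plus $\emptyset$ and $[0,\infty]$). $\mathbf{MetCH_{sep}}$ has these spaces as objects and continuous non-expansive maps ($d_Y(f(x),f(y))\le d_X(x,y)$) as morphisms. *)

theory Defs
  imports "HOL-Analysis.Analysis"
begin

text \<open>Objects of MetCH_sep: a compact Hausdorff space X (abstract topology, carrier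
  topspace X) with a separated (possibly asymmetric, possibly infinite) metric
  d with values in [0,\<infinity>] (type ennreal), continuous w.r.t. the upper topology on
  [0,\<infinity>] whose open sets are ]u,\<infinity>], i.e. every set {d > u} is open in X \<times> X.\<close>

definition MetCH_sep :: "'a topology \<Rightarrow> ('a \<Rightarrow> 'a \<Rightarrow> ennreal) \<Rightarrow> bool" where
  "MetCH_sep X d \<longleftrightarrow>
     compact_space X \<and> Hausdorff_space X \<and>
     (\<forall>x\<in>topspace X. d x x = 0) \<and>
     (\<forall>x\<in>topspace X. \<forall>y\<in>topspace X. \<forall>z\<in>topspace X. d x z \<le> d x y + d y z) \<and>
     (\<forall>x\<in>topspace X. \<forall>y\<in>topspace X. d x y = 0 \<and> d y x = 0 \<longrightarrow> x = y) \<and>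
     (\<forall>u. openin (prod_topology X X)
            {p \<in> topspace X \<times> topspace X. u < d (fst p) (snd p)})"

definition mor :: "'a topology \<Rightarrow> ('a \<Rightarrow> 'a \<Rightarrow> ennreal) \<Rightarrow>
                   'b topology \<Rightarrow> ('b \<Rightarrow> 'b \<Rightarrow> ennreal) \<Rightarrow> ('a \<Rightarrow> 'b) \<Rightarrow> bool" where
  "mor X dX Y dY f \<longleftrightarrow> continuous_map X Y f \<and>
     (\<forall>x\<in>topspace X. \<forall>y\<in>topspace X. dY (f x) (f y) \<le> dX x y)"

text \<open>m : A \<rightarrow> B is an equalizer of p, q : B \<rightarrow> E, where the universal property is
  tested against all objects W whose points live in the type 'w.
  Morphisms are identified when they agree on the carrier.\<close>

definition is_equalizer ::
  "'w itself \<Rightarrow> 'a topology \<Rightarrow> ('a \<Rightarrow> 'a \<Rightarrow> ennreal) \<Rightarrow>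
   'b topology \<Rightarrow> ('b \<Rightarrow> 'b \<Rightarrow> ennreal) \<Rightarrow> 'e topology \<Rightarrow> ('e \<Rightarrow> 'e \<Rightarrow> ennreal) \<Rightarrow>
   ('a \<Rightarrow> 'b) \<Rightarrow> ('b \<Rightarrow> 'e) \<Rightarrow> ('b \<Rightarrow> 'e) \<Rightarrow> bool" where
  "is_equalizer _ A dA B dB E dE m p q \<longleftrightarrow>
     mor A dA B dB m \<and> mor B dB E dE p \<and> mor B dB E dE q \<and>
     (\<forall>a\<in>topspace A. p (m a) = q (m a)) \<and>
     (\<forall>(W::'w topology) dW w.
        MetCH_sep W dW \<and> mor W dW B dB w \<and> (\<forall>x\<in>topspace W. p (w x) = q (w x)) \<longrightarrow>
        (\<exists>v. mor W dW A dA v \<and> (\<forall>x\<in>topspace W. m (v x) = w x)) \<and>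
        (\<forall>v v'. mor W dW A dA v \<and> (\<forall>x\<in>topspace W. m (v x) = w x) \<and>
                mor W dW A dA v' \<and> (\<forall>x\<in>topspace W. m (v' x) = w x) \<longrightarrow>
                (\<forall>x\<in>topspace W. v x = v' x)))"

definition is_pushout ::
  "'z itself \<Rightarrow> 'a topology \<Rightarrow> ('a \<Rightarrow> 'a \<Rightarrow> ennreal) \<Rightarrow>
   'b topology \<Rightarrow> ('b \<Rightarrow> 'b \<Rightarrow> ennreal) \<Rightarrow> 'c topology \<Rightarrow> ('c \<Rightarrow> 'c \<Rightarrow> ennreal) \<Rightarrow>
   'd topology \<Rightarrow> ('d \<Rightarrow> 'd \<Rightarrow> ennreal) \<Rightarrow>
   ('a \<Rightarrow> 'b) \<Rightarrow> ('a \<Rightarrow> 'c) \<Rightarrow> ('b \<Rightarrow> 'd) \<Rightarrow> ('c \<Rightarrow> 'd) \<Rightarrow> bool" where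
  "is_pushout _ A dA B dB C dC D dD m f g n \<longleftrightarrow>
     mor A dA B dB m \<and> mor A dA C dC f \<and> mor B dB D dD g \<and> mor C dC D dD n \<and>
     (\<forall>a\<in>topspace A. g (m a) = n (f a)) \<and>
     (\<forall>(Z::'z topology) dZ h k.
        MetCH_sep Z dZ \<and> mor B dB Z dZ h \<and> mor C dC Z dZ k \<and>
        (\<forall>a\<in>topspace A. h (m a) = k (f a)) \<longrightarrow>
        (\<exists>u. mor D dD Z dZ u \<and> (\<forall>b\<in>topspace B. u (g b) = h b) \<and>
             (\<forall>c\<in>topspace C. u (n c) = k c)) \<and>
        (\<forall>u u'. mor D dD Z dZ u \<and> (\<forall>b\<in>topspace B. u (g b) = h b) \<and>
                 (\<forall>c\<in>topspace C. u (n c) = k c) \<and>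
                 mor D dD Z dZ u' \<and> (\<forall>b\<in>topspace B. u' (g b) = h b) \<and>
                 (\<forall>c\<in>topspace C. u' (n c) = k c) \<longrightarrow>
                 (\<forall>x\<in>topspace D. u x = u' x)))"

end

(*
  Regular monomorphisms of MetCH_sep are exactly the isometric embeddings.

  An equalizer m is isometric: testing its universal property against finite discrete spaces
  carrying the metric of B shows that m is injective and that the factorisation of the
  inclusion of {m a, m a'} through m is non-expansive. Conversely, an isometric embedding
  n : C -> D is the equalizer of its cokernel pair, which glues two copies of D along n:
  a point on which the two coprojections agree is at distance zero, in both directions, from
  a point of n(C), hence lies in n(C); and an isometric embedding of a compact space is a
  topological embedding, so every map into n(C) factors continuously through n.

  Pushouts preserve isometric embeddings. Glue B and C along the isometric m and along f:
  the glued distance is the length of the shortest path that crosses between the summands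
  at most once, and identifying points at distance zero gives a separated compact Hausdorff
  space into which C embeds isometrically. The pushout D maps into it compatibly, so the
  distances of C are already those of their images in D.
*)

theory Submission
  imports Defs
begin

section \<open>Lower semicontinuous functions into \<open>[0,\<infinity>]\<close>\<close>

text \<open>Continuity into \<open>[0,\<infinity>]\<close> with the upper topology, i.e. lower semicontinuity.\<close>

definition lsc_map :: "'a topology \<Rightarrow> ('a \<Rightarrow> ennreal) \<Rightarrow> bool" where
  "lsc_map X \<phi> \<longleftrightarrow> (\<forall>u. openin X {x \<in> topspace X. u < \<phi> x})"

lemma lsc_map_cong:
  assumes "lsc_map X \<phi>" "\<And>x. x \<in> topspace X \<Longrightarrow> \<phi> x = \<psi> x"
  shows "lsc_map X \<psi>"
proof -
  have "{x \<in> topspace X. u < \<psi> x} = {x \<in> topspace X. u < \<phi> x}" for u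
    using assms(2) by auto
  then show ?thesis
    using assms(1) unfolding lsc_map_def by simp
qed

lemma lsc_map_compose:
  assumes "continuous_map X Y g" "lsc_map Y \<phi>"
  shows "lsc_map X (\<lambda>x. \<phi> (g x))"
  unfolding lsc_map_def
proof
  fix u
  have "{x \<in> topspace X. u < \<phi> (g x)} = {x \<in> topspace X. g x \<in> {y \<in> topspace Y. u < \<phi> y}}"
    using continuous_map_image_subset_topspace[OF assms(1)] by auto
  moreover have "openin X {x \<in> topspace X. g x \<in> {y \<in> topspace Y. u < \<phi> y}}"
    using assms openin_continuous_map_preimage unfolding lsc_map_def by blast
  ultimately show "openin X {x \<in> topspace X. u < \<phi> (g x)}"
    by simp
qed

lemma lsc_map_const: "lsc_map X (\<lambda>x. c)"
  unfolding lsc_map_def by (simp add: Collect_conj_eq)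

lemma lsc_map_min:
  assumes "lsc_map X \<phi>" "lsc_map X \<psi>"
  shows "lsc_map X (\<lambda>x. min (\<phi> x) (\<psi> x))"
proof -
  have "{x \<in> topspace X. u < min (\<phi> x) (\<psi> x)} =
        {x \<in> topspace X. u < \<phi> x} \<inter> {x \<in> topspace X. u < \<psi> x}" for u
    by auto
  then show ?thesis
    using assms unfolding lsc_map_def by auto
qed

lemma ennreal_less_add_left_approx:
  fixes u a c :: ennreal
  assumes "u < a + c" "0 < a"
  obtains a' where "a' < a" "u < a' + c"
proof -
  have "((\<lambda>x. x + c) \<longlongrightarrow> a + c) (at_left a)"
    by (intro tendsto_intros)
  then have "\<forall>\<^sub>F x in at_left a. u < x + c"
    using assms(1) by (rule order_tendstoD(1))
  then obtain b where b: "b < a" "\<forall>y>b. y < a \<longrightarrow> u < y + c"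
    unfolding eventually_at_left[OF assms(2)] by blast
  obtain y where "b < y" "y < a"
    using dense[OF b(1)] by blast
  then show ?thesis
    using b(2) that by blast
qed

lemma ennreal_less_add_approx:
  fixes u a b :: ennreal
  assumes "u < a + b" "0 < a" "0 < b"
  obtains a' b' where "a' < a" "b' < b" "u < a' + b'"
proof -
  obtain a' where a': "a' < a" "u < a' + b"
    using ennreal_less_add_left_approx assms(1,2) by blast
  moreover obtain b' where "b' < b" "u < b' + a'"
    using ennreal_less_add_left_approx[of u b a'] a'(2) assms(3) by (metis add.commute)
  ultimately show ?thesis
    using that[of a' b'] by (simp add: add.commute)
qed

lemma lsc_map_add:
  assumes \<phi>: "lsc_map X \<phi>" and \<psi>: "lsc_map X \<psi>"
  shows "lsc_map X (\<lambda>x. \<phi> x + \<psi> x)"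
  unfolding lsc_map_def
proof
  fix u
  define L where "L a = {x \<in> topspace X. a < \<phi> x}" for a
  define R where "R b = {x \<in> topspace X. b < \<psi> x}" for b
  have "{x \<in> topspace X. u < \<phi> x + \<psi> x} = L u \<union> R u \<union> (\<Union>(a, b)\<in>{(a, b). u < a + b}. L a \<inter> R b)"
  proof (intro equalityI subsetI)
    fix x assume x: "x \<in> {x \<in> topspace X. u < \<phi> x + \<psi> x}"
    show "x \<in> L u \<union> R u \<union> (\<Union>(a, b)\<in>{(a, b). u < a + b}. L a \<inter> R b)"
    proof (cases "\<phi> x = 0 \<or> \<psi> x = 0")
      case True
      with x show ?thesis unfolding L_def R_def by auto
    next
      case False
      then obtain a b where "a < \<phi> x" "b < \<psi> x" "u < a + b"
        using x ennreal_less_add_approx[of u "\<phi> x" "\<psi> x"] by (auto simp: zero_less_iff_neq_zero)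
      with x show ?thesis unfolding L_def R_def by blast
    qed
  next
    fix x assume "x \<in> L u \<union> R u \<union> (\<Union>(a, b)\<in>{(a, b). u < a + b}. L a \<inter> R b)"
    then show "x \<in> {x \<in> topspace X. u < \<phi> x + \<psi> x}"
      unfolding L_def R_def
      by (auto intro: less_le_trans add_increasing add_increasing2 add_mono less_imp_le)
  qed
  moreover have "openin X (L a)" "openin X (R a)" for a
    using \<phi> \<psi> unfolding lsc_map_def L_def R_def by auto
  ultimately show "openin X {x \<in> topspace X. u < \<phi> x + \<psi> x}"
    by (auto intro!: openin_Un openin_Union openin_Int)
qed

lemma lsc_map_INF_compact:
  assumes \<Phi>: "lsc_map (prod_topology P T) (\<lambda>z. \<Phi> (fst z) (snd z))" and K: "compactin T K"
  shows "lsc_map P (\<lambda>p. INF t\<in>K. \<Phi> p t)"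
  unfolding lsc_map_def
proof (intro allI openin_subopen[THEN iffD2] ballI)
  fix u p0
  assume "p0 \<in> {p \<in> topspace P. u < (INF t\<in>K. \<Phi> p t)}"
  then have p0: "p0 \<in> topspace P" and "u < (INF t\<in>K. \<Phi> p0 t)"
    by auto
  then obtain v where v: "u < v" "v < (INF t\<in>K. \<Phi> p0 t)"
    using dense by blast
  define W where "W = {z \<in> topspace (prod_topology P T). v < \<Phi> (fst z) (snd z)}"
  have "openin (prod_topology P T) W"
    using \<Phi> unfolding lsc_map_def W_def by blast
  moreover have "{p0} \<times> K \<subseteq> W"
    using v(2) p0 compactin_subset_topspace[OF K] unfolding W_def
    by (auto intro: less_le_trans[OF _ INF_lower])
  ultimately obtain U V where UV: "openin P U" "openin T V" "p0 \<in> U" "K \<subseteq> V" "U \<times> V \<subseteq> W"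
    using tube_lemma_right[OF _ K p0] by metis
  have "U \<subseteq> {p \<in> topspace P. u < (INF t\<in>K. \<Phi> p t)}"
  proof
    fix p assume p: "p \<in> U"
    have "v \<le> (INF t\<in>K. \<Phi> p t)"
      using p UV(4,5) unfolding W_def by (force intro: INF_greatest less_imp_le)
    then show "p \<in> {p \<in> topspace P. u < (INF t\<in>K. \<Phi> p t)}"
      using p v(1) openin_subset[OF UV(1)] by (auto intro: less_le_trans)
  qed
  then show "\<exists>U. openin P U \<and> p0 \<in> U \<and> U \<subseteq> {p \<in> topspace P. u < (INF t\<in>K. \<Phi> p t)}"
    using UV(1,3) by blast
qed

lemma INF_compact_pos:
  assumes \<Psi>: "lsc_map T \<Psi>" and K: "compactin T K" and pos: "\<And>t. t \<in> K \<Longrightarrow> 0 < \<Psi> t"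
  shows "0 < (INF t\<in>K. \<Psi> t)"
proof -
  define U where "U v = {t \<in> topspace T. v < \<Psi> t}" for v
  have "K \<subseteq> \<Union>(U ` {0<..})"
    using pos compactin_subset_topspace[OF K] dense unfolding U_def by fastforce
  moreover have "openin T (U v)" for v
    using \<Psi> unfolding lsc_map_def U_def by blast
  ultimately obtain \<F> where "finite \<F>" "\<F> \<subseteq> U ` {0<..}" "K \<subseteq> \<Union>\<F>"
    using compactinD[OF K] by (metis imageE)
  then obtain V where V: "finite V" "V \<subseteq> {0<..}" "K \<subseteq> \<Union>(U ` V)"
    by (metis finite_subset_image)
  show ?thesis
  proof (cases "K = {}")
    case False
    then have "V \<noteq> {}"
      using V(3) by auto
    have "Min V \<le> \<Psi> t" if "t \<in> K" for t
      using V that unfolding U_def by (force intro: order.trans[OF Min_le] less_imp_le)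
    then have "Min V \<le> (INF t\<in>K. \<Psi> t)"
      by (rule INF_greatest)
    moreover have "0 < Min V"
      using V \<open>V \<noteq> {}\<close> by auto
    ultimately show ?thesis
      by (rule less_le_trans[rotated])
  qed simp
qed

section \<open>The separated quotient of a compact pseudometric space\<close>

definition quotient_topology :: "'a topology \<Rightarrow> ('a \<Rightarrow> 'b) \<Rightarrow> 'b topology" where
  "quotient_topology X f = topology (\<lambda>U. U \<subseteq> f ` topspace X \<and> openin X {x \<in> topspace X. f x \<in> U})"

lemma openin_quotient_topology:
  "openin (quotient_topology X f) U \<longleftrightarrow> U \<subseteq> f ` topspace X \<and> openin X {x \<in> topspace X. f x \<in> U}"
proof -
  have "{x \<in> topspace X. f x \<in> S \<inter> T} = {x \<in> topspace X. f x \<in> S} \<inter> {x \<in> topspace X. f x \<in> T}"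
    for S T by auto
  moreover have "{x \<in> topspace X. f x \<in> \<Union>\<K>} = (\<Union>S\<in>\<K>. {x \<in> topspace X. f x \<in> S})" for \<K>
    by auto
  ultimately have "istopology (\<lambda>U. U \<subseteq> f ` topspace X \<and> openin X {x \<in> topspace X. f x \<in> U})"
    unfolding istopology_def by (auto intro!: openin_Int openin_Union)
  then show ?thesis
    unfolding quotient_topology_def by simp
qed

lemma topspace_quotient_topology: "topspace (quotient_topology X f) = f ` topspace X"
proof -
  have "{x \<in> topspace X. f x \<in> f ` topspace X} = topspace X"
    by auto
  then have "openin (quotient_topology X f) (f ` topspace X)"
    unfolding openin_quotient_topology by auto
  then have "f ` topspace X \<subseteq> topspace (quotient_topology X f)"
    by (rule openin_subset)
  moreover have "topspace (quotient_topology X f) \<subseteq> f ` topspace X"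
    using openin_topspace[of "quotient_topology X f"] unfolding openin_quotient_topology by (rule conjunct1)
  ultimately show ?thesis
    by (rule subset_antisym[rotated])
qed

lemma quotient_map_quotient_topology: "quotient_map X (quotient_topology X f) f"
  unfolding quotient_map_def topspace_quotient_topology openin_quotient_topology by auto

locale MetCH =
  fixes X :: "'a topology" and d :: "'a \<Rightarrow> 'a \<Rightarrow> ennreal"
  assumes compact: "compact_space X" and Hausdorff: "Hausdorff_space X"
    and dist_refl: "\<And>x. x \<in> topspace X \<Longrightarrow> d x x = 0"
    and dist_triangle:
      "\<And>x y z. x \<in> topspace X \<Longrightarrow> y \<in> topspace X \<Longrightarrow> z \<in> topspace X \<Longrightarrow> d x z \<le> d x y + d y z"
    and lsc_dist: "lsc_map (prod_topology X X) (\<lambda>z. d (fst z) (snd z))"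

lemma MetCH_sep_iff:
  "MetCH_sep X d \<longleftrightarrow>
     MetCH X d \<and> (\<forall>x\<in>topspace X. \<forall>y\<in>topspace X. d x y = 0 \<and> d y x = 0 \<longrightarrow> x = y)"
  unfolding MetCH_sep_def MetCH_def lsc_map_def topspace_prod_topology by auto

lemma MetCH_sep_imp_MetCH: "MetCH_sep X d \<Longrightarrow> MetCH X d"
  by (simp add: MetCH_sep_iff)

lemma MetCH_sep_separated:
  "MetCH_sep X d \<Longrightarrow> x \<in> topspace X \<Longrightarrow> y \<in> topspace X \<Longrightarrow> d x y = 0 \<Longrightarrow> d y x = 0 \<Longrightarrow> x = y"
  by (simp add: MetCH_sep_iff)

context MetCH
begin

lemma lsc_dist_compose:
  assumes "continuous_map P X g" "continuous_map P X h"
  shows "lsc_map P (\<lambda>p. d (g p) (h p))"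
  using lsc_map_compose[OF continuous_map_pairedI[OF assms] lsc_dist] by simp

definition indist :: "'a \<Rightarrow> 'a \<Rightarrow> bool" where
  "indist x y \<longleftrightarrow> d x y = 0 \<and> d y x = 0"

text \<open>Each class of indistinguishable points is represented by a chosen member, so that the
  separated quotient lives on a subset of the same type.\<close>

definition rep :: "'a \<Rightarrow> 'a" where
  "rep x = (SOME y. y \<in> topspace X \<and> indist y x)"

definition separated_quotient :: "'a topology" where
  "separated_quotient = quotient_topology X rep"

lemma indist_sym: "indist x y \<longleftrightarrow> indist y x"
  by (auto simp: indist_def)

lemma indist_trans:
  "x \<in> topspace X \<Longrightarrow> y \<in> topspace X \<Longrightarrow> z \<in> topspace X \<Longrightarrow> indist x y \<Longrightarrow> indist y z \<Longrightarrow> indist x z"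
  using dist_triangle[of x y z] dist_triangle[of z y x] unfolding indist_def by simp

lemma rep_in_topspace: "x \<in> topspace X \<Longrightarrow> rep x \<in> topspace X"
  and indist_rep: "x \<in> topspace X \<Longrightarrow> indist (rep x) x"
proof -
  assume "x \<in> topspace X"
  then have "\<exists>y. y \<in> topspace X \<and> indist y x"
    using dist_refl indist_def by blast
  then have "rep x \<in> topspace X \<and> indist (rep x) x"
    unfolding rep_def by (rule someI_ex)
  then show "rep x \<in> topspace X" "indist (rep x) x"
    by auto
qed

lemma dist_rep:
  assumes x: "x \<in> topspace X" and y: "y \<in> topspace X"
  shows "d (rep x) (rep y) = d x y"
proof (rule antisym)
  have 0: "d (rep x) x = 0" "d x (rep x) = 0" "d (rep y) y = 0" "d y (rep y) = 0"
    using indist_rep x y by (auto simp: indist_def)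
  have "d (rep x) (rep y) \<le> d (rep x) x + d x (rep y)"
    using dist_triangle rep_in_topspace x y by blast
  also have "d x (rep y) \<le> d x y + d y (rep y)"
    using dist_triangle rep_in_topspace x y by blast
  finally show "d (rep x) (rep y) \<le> d x y"
    using 0 by (simp add: add_mono)
  have "d x y \<le> d x (rep x) + d (rep x) y"
    using dist_triangle rep_in_topspace x y by blast
  also have "d (rep x) y \<le> d (rep x) (rep y) + d (rep y) y"
    using dist_triangle rep_in_topspace x y by blast
  finally show "d x y \<le> d (rep x) (rep y)"
    using 0 by (simp add: add_mono)
qed

lemma rep_eq_iff:
  assumes x: "x \<in> topspace X" and y: "y \<in> topspace X"
  shows "rep x = rep y \<longleftrightarrow> indist x y"
proof
  assume "rep x = rep y"
  moreover have "d (rep x) (rep x) = 0"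
    using dist_refl rep_in_topspace x by blast
  ultimately show "indist x y"
    using dist_rep[OF x y] dist_rep[OF y x] by (simp add: indist_def)
next
  assume "indist x y"
  then have "(\<lambda>z. z \<in> topspace X \<and> indist z x) = (\<lambda>z. z \<in> topspace X \<and> indist z y)"
    using indist_trans indist_sym x y by blast
  then show "rep x = rep y"
    by (simp add: rep_def)
qed

lemma rep_rep: "x \<in> topspace X \<Longrightarrow> rep (rep x) = rep x"
  using rep_eq_iff rep_in_topspace indist_rep by blast

lemma topspace_separated_quotient: "topspace separated_quotient = rep ` topspace X"
  by (simp add: separated_quotient_def topspace_quotient_topology)

lemma quotient_map_rep: "quotient_map X separated_quotient rep"
  unfolding separated_quotient_def by (rule quotient_map_quotient_topology)

lemma continuous_map_rep: "continuous_map X separated_quotient rep"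
  by (rule quotient_imp_continuous_map[OF quotient_map_rep])

lemma closedin_indist: "closedin (prod_topology X X) {z \<in> topspace X \<times> topspace X. indist (fst z) (snd z)}"
proof -
  have "lsc_map (prod_topology X X) (\<lambda>z. d (fst z) (snd z) + d (snd z) (fst z))"
    by (intro lsc_map_add lsc_dist_compose continuous_map_fst continuous_map_snd)
  then have "openin (prod_topology X X)
               {z \<in> topspace (prod_topology X X). 0 < d (fst z) (snd z) + d (snd z) (fst z)}"
    unfolding lsc_map_def by blast
  moreover have "{z \<in> topspace X \<times> topspace X. indist (fst z) (snd z)} =
      topspace (prod_topology X X) -
        {z \<in> topspace (prod_topology X X). 0 < d (fst z) (snd z) + d (snd z) (fst z)}"
    by (auto simp: indist_def)
  ultimately show ?thesis
    by (metis (no_types) closedin_diff closedin_topspace)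
qed

lemma closed_map_rep: "closed_map X separated_quotient rep"
  unfolding closed_map_def
proof (intro allI impI)
  fix K assume K: "closedin X K"
  define S where "S = (K \<times> topspace X) \<inter> {z \<in> topspace X \<times> topspace X. indist (fst z) (snd z)}"
  have "closedin (prod_topology X X) S"
    unfolding S_def using K closedin_indist by (auto simp: closedin_prod_Times_iff intro!: closedin_Int)
  then have "closedin X (snd ` S)"
    by (rule closed_map_snd[OF compact, unfolded closed_map_def, rule_format])
  moreover have "snd ` S = {x \<in> topspace X. rep x \<in> rep ` K}"
  proof (intro equalityI subsetI)
    fix x assume "x \<in> snd ` S"
    then obtain k where "x \<in> topspace X" "k \<in> K" "indist k x"
      unfolding S_def by auto
    moreover from this have "rep x = rep k"
      using closedin_subset[OF K] rep_eq_iff[of k x] by auto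
    ultimately show "x \<in> {x \<in> topspace X. rep x \<in> rep ` K}"
      by auto
  next
    fix x assume "x \<in> {x \<in> topspace X. rep x \<in> rep ` K}"
    then obtain k where "x \<in> topspace X" "k \<in> K" "rep k = rep x"
      by auto
    then show "x \<in> snd ` S"
      unfolding S_def using closedin_subset[OF K] rep_eq_iff[of k x] by (intro rev_image_eqI[of "(k, x)"]) auto
  qed
  moreover have "rep ` K \<subseteq> topspace separated_quotient"
    using closedin_subset[OF K] by (auto simp: topspace_separated_quotient)
  ultimately show "closedin separated_quotient (rep ` K)"
    using quotient_map_rep[unfolded quotient_map_closedin, THEN conjunct2, rule_format, of "rep ` K"] by simp
qed

lemma compact_separated_quotient: "compact_space separated_quotient"
  using image_compactin[OF compact[unfolded compact_space_def] continuous_map_rep]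
  by (simp add: compact_space_def topspace_separated_quotient)

lemma Hausdorff_separated_quotient: "Hausdorff_space separated_quotient"
  using normal_Hausdorff_space_closed_continuous_map_image[OF _ Hausdorff closed_map_rep continuous_map_rep]
    compact_Hausdorff_or_regular_imp_normal_space compact Hausdorff topspace_separated_quotient
  by blast

lemma lsc_dist_separated_quotient:
  "lsc_map (prod_topology separated_quotient separated_quotient) (\<lambda>z. d (fst z) (snd z))"
  unfolding lsc_map_def
proof
  fix u
  let ?Q = separated_quotient and ?\<rho> = "\<lambda>z. (rep (fst z), rep (snd z))"
  have qm: "quotient_map (prod_topology X X) (prod_topology ?Q ?Q) ?\<rho>" (is "quotient_map ?XX ?QQ _")
  proof (rule continuous_imp_quotient_map)
    show "continuous_map (prod_topology X X) (prod_topology ?Q ?Q) ?\<rho>"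
      by (intro continuous_map_pairedI continuous_map_compose[OF continuous_map_fst continuous_map_rep,
            unfolded o_def] continuous_map_compose[OF continuous_map_snd continuous_map_rep, unfolded o_def])
    show "?\<rho> ` topspace (prod_topology X X) = topspace (prod_topology ?Q ?Q)"
      using image_paired_Times[of rep rep "topspace X" "topspace X"]
      by (simp add: case_prod_unfold topspace_separated_quotient)
  qed (simp_all add: compact compact_space_prod_topology Hausdorff_separated_quotient
        Hausdorff_space_prod_topology)
  have "{z \<in> topspace ?XX. ?\<rho> z \<in> {z \<in> topspace ?QQ. u < d (fst z) (snd z)}}
      = {z \<in> topspace ?XX. u < d (fst z) (snd z)}"
  proof -
    have "?\<rho> z \<in> topspace ?QQ" "d (rep (fst z)) (rep (snd z)) = d (fst z) (snd z)"
      if "z \<in> topspace ?XX" for z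
      using that by (auto simp: topspace_separated_quotient dist_rep)
    then show ?thesis
      by auto
  qed
  then have "openin ?XX {z \<in> topspace ?XX. ?\<rho> z \<in> {z \<in> topspace ?QQ. u < d (fst z) (snd z)}}"
    using lsc_dist unfolding lsc_map_def by simp
  then show "openin ?QQ {z \<in> topspace ?QQ. u < d (fst z) (snd z)}"
    using qm[unfolded quotient_map_def, THEN conjunct2, rule_format,
        of "{z \<in> topspace ?QQ. u < d (fst z) (snd z)}"]
    by simp
qed

lemma MetCH_sep_separated_quotient: "MetCH_sep separated_quotient d"
  unfolding MetCH_sep_iff MetCH_def
proof (intro conjI ballI impI)
  have Q: "topspace separated_quotient \<subseteq> topspace X"
    using rep_in_topspace by (auto simp: topspace_separated_quotient)
  fix x y assume "x \<in> topspace separated_quotient" "y \<in> topspace separated_quotient" "d x y = 0 \<and> d y x = 0"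
  then show "x = y"
    using rep_eq_iff rep_rep Q by (auto simp: topspace_separated_quotient indist_def dist_rep)
qed (use compact_separated_quotient Hausdorff_separated_quotient lsc_dist_separated_quotient
         topspace_separated_quotient rep_in_topspace dist_refl dist_triangle in auto)

end

section \<open>Disjoint unions\<close>

lemma open_map_prod_left:
  assumes f: "open_map X X' f"
  shows "open_map (prod_topology X Y) (prod_topology X' Y) (\<lambda>z. (f (fst z), snd z))"
  unfolding open_map_def
proof (intro allI impI)
  fix W assume W: "openin (prod_topology X Y) W"
  show "openin (prod_topology X' Y) ((\<lambda>z. (f (fst z), snd z)) ` W)"
  proof (subst openin_subopen, intro ballI)
    fix z assume "z \<in> (\<lambda>z. (f (fst z), snd z)) ` W"
    then obtain x y where xy: "(x, y) \<in> W" "z = (f x, y)"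
      by auto
    obtain U V where UV: "openin X U" "openin Y V" "x \<in> U" "y \<in> V" "U \<times> V \<subseteq> W"
      using openin_prod_topology_alt[THEN iffD1, OF W, rule_format, OF xy(1)] by blast
    have "openin (prod_topology X' Y) (f ` U \<times> V)"
      using UV f by (simp add: openin_prod_Times_iff open_map_def)
    moreover have "f ` U \<times> V = (\<lambda>z. (f (fst z), snd z)) ` (U \<times> V)"
      using image_paired_Times[of f "\<lambda>y. y" U V] by (simp add: case_prod_unfold)
    then have "f ` U \<times> V \<subseteq> (\<lambda>z. (f (fst z), snd z)) ` W"
      using image_mono[OF UV(5)] by simp
    ultimately show "\<exists>T. openin (prod_topology X' Y) T \<and> z \<in> T \<and> T \<subseteq> (\<lambda>z. (f (fst z), snd z)) ` W"
      using UV xy by (intro exI[of _ "f ` U \<times> V"]) auto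
  qed
qed

locale binary_sum =
  fixes i1 :: "'c \<Rightarrow> 'z" and C :: "'c topology" and i2 :: "'b \<Rightarrow> 'z" and B :: "'b topology"
  assumes inj1: "inj i1" and inj2: "inj i2" and disjoint: "\<And>c b. i1 c \<noteq> i2 b"
begin

definition disjoint_union :: "'z topology" where
  "disjoint_union = topology (\<lambda>U. U \<subseteq> i1 ` topspace C \<union> i2 ` topspace B \<and>
      openin C {c \<in> topspace C. i1 c \<in> U} \<and> openin B {b \<in> topspace B. i2 b \<in> U})"

lemma openin_disjoint_union:
  "openin disjoint_union U \<longleftrightarrow> U \<subseteq> i1 ` topspace C \<union> i2 ` topspace B \<and>
      openin C {c \<in> topspace C. i1 c \<in> U} \<and> openin B {b \<in> topspace B. i2 b \<in> U}"
proof -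
  have Int: "{x \<in> topspace X. f x \<in> S \<inter> T} = {x \<in> topspace X. f x \<in> S} \<inter> {x \<in> topspace X. f x \<in> T}"
    for X :: "'x topology" and f :: "'x \<Rightarrow> 'z" and S T by auto
  have Union: "{x \<in> topspace X. f x \<in> \<Union>\<K>} = (\<Union>S\<in>\<K>. {x \<in> topspace X. f x \<in> S})"
    for X :: "'x topology" and f :: "'x \<Rightarrow> 'z" and \<K> by auto
  have "istopology (\<lambda>U. U \<subseteq> i1 ` topspace C \<union> i2 ` topspace B \<and>
      openin C {c \<in> topspace C. i1 c \<in> U} \<and> openin B {b \<in> topspace B. i2 b \<in> U})"
    unfolding istopology_def Int Union
  proof (rule conjI; intro allI impI)
    fix S T
    assume "S \<subseteq> i1 ` topspace C \<union> i2 ` topspace B \<and>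
      openin C {c \<in> topspace C. i1 c \<in> S} \<and> openin B {b \<in> topspace B. i2 b \<in> S}"
      "T \<subseteq> i1 ` topspace C \<union> i2 ` topspace B \<and>
      openin C {c \<in> topspace C. i1 c \<in> T} \<and> openin B {b \<in> topspace B. i2 b \<in> T}"
    then show "S \<inter> T \<subseteq> i1 ` topspace C \<union> i2 ` topspace B \<and>
      openin C ({c \<in> topspace C. i1 c \<in> S} \<inter> {c \<in> topspace C. i1 c \<in> T}) \<and>
      openin B ({b \<in> topspace B. i2 b \<in> S} \<inter> {b \<in> topspace B. i2 b \<in> T})"
      by (simp add: le_infI1 openin_Int)
  next
    fix \<K>
    assume "\<forall>S\<in>\<K>. S \<subseteq> i1 ` topspace C \<union> i2 ` topspace B \<and>
      openin C {c \<in> topspace C. i1 c \<in> S} \<and> openin B {b \<in> topspace B. i2 b \<in> S}"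
    then show "\<Union>\<K> \<subseteq> i1 ` topspace C \<union> i2 ` topspace B \<and>
      openin C (\<Union>S\<in>\<K>. {c \<in> topspace C. i1 c \<in> S}) \<and>
      openin B (\<Union>S\<in>\<K>. {b \<in> topspace B. i2 b \<in> S})"
      by (simp add: Sup_le_iff) (auto intro!: openin_Union)
  qed
  then show ?thesis
    unfolding disjoint_union_def by simp
qed

lemma topspace_disjoint_union: "topspace disjoint_union = i1 ` topspace C \<union> i2 ` topspace B"
proof -
  have "{c \<in> topspace C. i1 c \<in> i1 ` topspace C \<union> i2 ` topspace B} = topspace C"
    "{b \<in> topspace B. i2 b \<in> i1 ` topspace C \<union> i2 ` topspace B} = topspace B"
    by auto
  then have "openin disjoint_union (i1 ` topspace C \<union> i2 ` topspace B)"
    unfolding openin_disjoint_union by simp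
  then have "i1 ` topspace C \<union> i2 ` topspace B \<subseteq> topspace disjoint_union"
    by (rule openin_subset)
  moreover have "topspace disjoint_union \<subseteq> i1 ` topspace C \<union> i2 ` topspace B"
    using openin_topspace[of disjoint_union] unfolding openin_disjoint_union by (rule conjunct1)
  ultimately show ?thesis
    by (rule subset_antisym[rotated])
qed

lemma continuous_map_i1: "continuous_map C disjoint_union i1"
  unfolding continuous_map_def topspace_disjoint_union openin_disjoint_union by auto

lemma continuous_map_i2: "continuous_map B disjoint_union i2"
  unfolding continuous_map_def topspace_disjoint_union openin_disjoint_union by auto

lemma open_map_i1: "open_map C disjoint_union i1"
  unfolding open_map_def
proof (intro allI impI)
  fix U assume U: "openin C U"
  have eqs: "{c \<in> topspace C. i1 c \<in> i1 ` U} = U" "{b \<in> topspace B. i2 b \<in> i1 ` U} = {}"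
    using openin_subset[OF U] inj1 disjoint by (auto simp: inj_image_mem_iff dest: sym)
  show "openin disjoint_union (i1 ` U)"
    using U openin_subset[OF U] unfolding openin_disjoint_union eqs by auto
qed

lemma open_map_i2: "open_map B disjoint_union i2"
  unfolding open_map_def
proof (intro allI impI)
  fix U assume U: "openin B U"
  have eqs: "{b \<in> topspace B. i2 b \<in> i2 ` U} = U" "{c \<in> topspace C. i1 c \<in> i2 ` U} = {}"
    using openin_subset[OF U] inj2 disjoint by (auto simp: inj_image_mem_iff)
  show "openin disjoint_union (i2 ` U)"
    using U openin_subset[OF U] unfolding openin_disjoint_union eqs by auto
qed

lemma compact_disjoint_union:
  "compact_space C \<Longrightarrow> compact_space B \<Longrightarrow> compact_space disjoint_union"
  unfolding compact_space_def topspace_disjoint_union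
  by (intro compactin_Un image_compactin[OF _ continuous_map_i1] image_compactin[OF _ continuous_map_i2])

lemma separate_by_open_injection:
  assumes "Hausdorff_space X" "open_map X disjoint_union f" "inj f"
    and "x \<in> topspace X" "y \<in> topspace X" "f x \<noteq> f y"
  shows "\<exists>U V. openin disjoint_union U \<and> openin disjoint_union V \<and> f x \<in> U \<and> f y \<in> V \<and> disjnt U V"
proof -
  have "x \<noteq> y"
    using assms(6) by auto
  then obtain U V where "openin X U" "openin X V" "x \<in> U" "y \<in> V" "disjnt U V"
    using assms(1,4,5) unfolding Hausdorff_space_def by blast
  then show ?thesis
    using assms(2,3) unfolding open_map_def
    by (intro exI[of _ "f ` U"] exI[of _ "f ` V"]) (auto simp: disjnt_def inj_image_mem_iff inj_eq)
qed

lemma Hausdorff_disjoint_union: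
  assumes "Hausdorff_space C" "Hausdorff_space B"
  shows "Hausdorff_space disjoint_union"
  unfolding Hausdorff_space_def
proof (intro allI impI)
  fix x y assume xy: "x \<in> topspace disjoint_union \<and> y \<in> topspace disjoint_union \<and> x \<noteq> y"
  have pieces: "openin disjoint_union (i1 ` topspace C)" "openin disjoint_union (i2 ` topspace B)"
    "disjnt (i1 ` topspace C) (i2 ` topspace B)"
    using open_map_i1 open_map_i2 disjoint by (auto simp: open_map_def disjnt_def)
  show "\<exists>U V. openin disjoint_union U \<and> openin disjoint_union V \<and> x \<in> U \<and> y \<in> V \<and> disjnt U V"
  proof (cases "x \<in> i1 ` topspace C"; cases "y \<in> i1 ` topspace C")
    assume "x \<in> i1 ` topspace C" "y \<in> i1 ` topspace C"
    then show ?thesis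
      using separate_by_open_injection[OF assms(1) open_map_i1 inj1] xy by auto
  next
    assume "x \<notin> i1 ` topspace C" "y \<notin> i1 ` topspace C"
    then have "x \<in> i2 ` topspace B" "y \<in> i2 ` topspace B"
      using xy topspace_disjoint_union by auto
    then show ?thesis
      using separate_by_open_injection[OF assms(2) open_map_i2 inj2] xy by auto
  next
    assume "x \<in> i1 ` topspace C" "y \<notin> i1 ` topspace C"
    then show ?thesis
      using pieces xy topspace_disjoint_union
      by (intro exI[of _ "i1 ` topspace C"] exI[of _ "i2 ` topspace B"]) auto
  next
    assume "x \<notin> i1 ` topspace C" "y \<in> i1 ` topspace C"
    then show ?thesis
      using pieces xy topspace_disjoint_union
      by (intro exI[of _ "i2 ` topspace B"] exI[of _ "i1 ` topspace C"]) (auto simp: disjnt_sym)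
  qed
qed

lemma openin_prod_disjoint_union:
  assumes W: "W \<subseteq> topspace disjoint_union \<times> topspace Y"
    and W1: "openin (prod_topology C Y) {z \<in> topspace C \<times> topspace Y. (i1 (fst z), snd z) \<in> W}"
    and W2: "openin (prod_topology B Y) {z \<in> topspace B \<times> topspace Y. (i2 (fst z), snd z) \<in> W}"
  shows "openin (prod_topology disjoint_union Y) W"
proof -
  let ?W1 = "{z \<in> topspace C \<times> topspace Y. (i1 (fst z), snd z) \<in> W}"
  let ?W2 = "{z \<in> topspace B \<times> topspace Y. (i2 (fst z), snd z) \<in> W}"
  have W_eq: "W = (\<lambda>z. (i1 (fst z), snd z)) ` ?W1 \<union> (\<lambda>z. (i2 (fst z), snd z)) ` ?W2"
  proof (intro equalityI subsetI)
    fix z assume z: "z \<in> W"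
    then obtain x y where "z = (x, y)" "x \<in> i1 ` topspace C \<union> i2 ` topspace B" "y \<in> topspace Y"
      using W topspace_disjoint_union by auto
    with z show "z \<in> (\<lambda>z. (i1 (fst z), snd z)) ` ?W1 \<union> (\<lambda>z. (i2 (fst z), snd z)) ` ?W2"
      by (auto intro: rev_image_eqI)
  qed auto
  show ?thesis
    by (subst W_eq, intro openin_Un W1 W2 open_map_prod_left[OF open_map_i1, unfolded open_map_def, rule_format]
        open_map_prod_left[OF open_map_i2, unfolded open_map_def, rule_format])
qed

lemma lsc_map_disjoint_union_left:
  assumes "lsc_map (prod_topology C Y) (\<lambda>z. \<phi> (i1 (fst z)) (snd z))"
    and "lsc_map (prod_topology B Y) (\<lambda>z. \<phi> (i2 (fst z)) (snd z))"
  shows "lsc_map (prod_topology disjoint_union Y) (\<lambda>z. \<phi> (fst z) (snd z))"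
  unfolding lsc_map_def
proof
  fix u
  let ?SY = "prod_topology disjoint_union Y"
  have "{z \<in> topspace C \<times> topspace Y. (i1 (fst z), snd z) \<in> {z \<in> topspace ?SY. u < \<phi> (fst z) (snd z)}}
      = {z \<in> topspace (prod_topology C Y). u < \<phi> (i1 (fst z)) (snd z)}"
    "{z \<in> topspace B \<times> topspace Y. (i2 (fst z), snd z) \<in> {z \<in> topspace ?SY. u < \<phi> (fst z) (snd z)}}
      = {z \<in> topspace (prod_topology B Y). u < \<phi> (i2 (fst z)) (snd z)}"
    by (auto simp: topspace_disjoint_union)
  then show "openin ?SY {z \<in> topspace ?SY. u < \<phi> (fst z) (snd z)}"
    using assms unfolding lsc_map_def by (intro openin_prod_disjoint_union) auto
qed

lemma lsc_map_disjoint_union_right: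
  assumes "lsc_map (prod_topology Y C) (\<lambda>z. \<phi> (fst z) (i1 (snd z)))"
    and "lsc_map (prod_topology Y B) (\<lambda>z. \<phi> (fst z) (i2 (snd z)))"
  shows "lsc_map (prod_topology Y disjoint_union) (\<lambda>z. \<phi> (fst z) (snd z))"
proof -
  have swap: "continuous_map (prod_topology U V) (prod_topology V U) (\<lambda>z. (snd z, fst z))"
    for U :: "'u topology" and V :: "'v topology"
    by (intro continuous_map_pairedI continuous_map_fst continuous_map_snd)
  have "lsc_map (prod_topology disjoint_union Y) (\<lambda>z. \<phi> (snd z) (fst z))"
    using lsc_map_disjoint_union_left[where \<phi>="\<lambda>x y. \<phi> y x"]
      lsc_map_compose[OF swap assms(1)] lsc_map_compose[OF swap assms(2)] by simp
  from lsc_map_compose[OF swap this] show ?thesis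
    by simp
qed

end

section \<open>Gluing along a compact space\<close>

lemma continuous_map_fst_compose:
  "continuous_map X Z g \<Longrightarrow> continuous_map (prod_topology X Y) Z (\<lambda>z. g (fst z))"
  using continuous_map_compose[OF continuous_map_fst] by (simp add: o_def)

lemma continuous_map_snd_compose:
  "continuous_map Y Z g \<Longrightarrow> continuous_map (prod_topology X Y) Z (\<lambda>z. g (snd z))"
  using continuous_map_compose[OF continuous_map_snd] by (simp add: o_def)

lemma ennreal_le_add_Inf:
  fixes L c :: ennreal
  assumes "\<And>v. v \<in> S \<Longrightarrow> L \<le> c + v"
  shows "L \<le> c + Inf S"
proof (cases "S = {}")
  case False
  have "c + Inf S = Inf ((+) c ` S)"
    by (rule continuous_at_Inf_mono)
       (use False in \<open>auto simp: mono_def add_left_mono intro!: continuous_intros\<close>)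
  then show ?thesis
    using assms by (simp add: le_Inf_iff)
qed simp

lemma ennreal_le_Inf_add_Inf:
  fixes L :: ennreal
  assumes "\<And>u v. u \<in> S \<Longrightarrow> v \<in> T \<Longrightarrow> L \<le> u + v"
  shows "L \<le> Inf S + Inf T"
proof -
  have "L \<le> Inf T + Inf S"
  proof (rule ennreal_le_add_Inf)
    fix u assume "u \<in> S"
    then have "L \<le> u + Inf T"
      by (intro ennreal_le_add_Inf assms)
    then show "L \<le> Inf T + u"
      by (simp add: add.commute)
  qed
  then show ?thesis
    by (simp add: add.commute)
qed

locale metric_gluing = binary_sum i1 C i2 B
  for i1 :: "'c \<Rightarrow> 'z" and C :: "'c topology" and i2 :: "'b \<Rightarrow> 'z" and B :: "'b topology" +
  fixes dC :: "'c \<Rightarrow> 'c \<Rightarrow> ennreal" and dB :: "'b \<Rightarrow> 'b \<Rightarrow> ennreal"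
    and A :: "'a topology" and f :: "'a \<Rightarrow> 'c" and m :: "'a \<Rightarrow> 'b"
  assumes MetCH_C: "MetCH C dC" and MetCH_B: "MetCH B dB" and compact_A: "compact_space A"
    and continuous_f: "continuous_map A C f" and continuous_m: "continuous_map A B m"
    and f_le_m: "\<And>a a'. a \<in> topspace A \<Longrightarrow> a' \<in> topspace A \<Longrightarrow> dC (f a) (f a') \<le> dB (m a) (m a')"
begin

sublocale dC: MetCH C dC
  by (rule MetCH_C)

sublocale dB: MetCH B dB
  by (rule MetCH_B)

definition local_dist :: "'z \<Rightarrow> 'z \<Rightarrow> ennreal" where
  "local_dist z w =
     (if z \<in> range i1 \<and> w \<in> range i1 then dC (inv i1 z) (inv i1 w)
      else if z \<in> range i2 \<and> w \<in> range i2 then dB (inv i2 z) (inv i2 w) else top)"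

definition anchor :: "'z \<Rightarrow> 'a \<Rightarrow> 'z" where
  "anchor z a = (if z \<in> range i1 then i1 (f a) else i2 (m a))"

definition bridge_dist :: "'z \<Rightarrow> 'z \<Rightarrow> 'a \<times> 'a \<Rightarrow> ennreal" where
  "bridge_dist z w p =
     local_dist z (anchor z (fst p)) + dC (f (fst p)) (f (snd p)) + local_dist (anchor w (snd p)) w"

text \<open>The lengths of the paths from \<open>z\<close> to \<open>w\<close> that either stay in one summand, or cross
  once: from \<open>z\<close> to the copy of \<open>a\<close> in its summand, from \<open>f a\<close> to \<open>f a'\<close> inside \<open>C\<close>,
  and from the copy of \<open>a'\<close> to \<open>w\<close>. Paths crossing several times are never shorter,
  because \<open>dC (f a) (f a') \<le> dB (m a) (m a')\<close>.\<close>

definition path_lengths :: "'z \<Rightarrow> 'z \<Rightarrow> ennreal set" where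
  "path_lengths z w = insert (local_dist z w) (bridge_dist z w ` (topspace A \<times> topspace A))"

definition glue_dist :: "'z \<Rightarrow> 'z \<Rightarrow> ennreal" where
  "glue_dist z w = Inf (path_lengths z w)"

lemma glue_dist_eq_min:
  "glue_dist z w = min (local_dist z w) (INF p\<in>topspace A \<times> topspace A. bridge_dist z w p)"
  by (simp add: glue_dist_def path_lengths_def Inf_insert inf_min)

lemma range_i1_i2: "i1 c \<notin> range i2" "i2 b \<notin> range i1"
  using disjoint by (auto dest: sym)

lemma local_dist_simps [simp]:
  "local_dist (i1 c) (i1 c') = dC c c'" "local_dist (i2 b) (i2 b') = dB b b'"
  "local_dist (i1 c) (i2 b) = top" "local_dist (i2 b) (i1 c) = top"
  unfolding local_dist_def using range_i1_i2 inj1 inj2 by auto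

lemma anchor_simps [simp]: "anchor (i1 c) a = i1 (f a)" "anchor (i2 b) a = i2 (m a)"
  unfolding anchor_def using range_i1_i2 by auto

lemma f_in_topspace: "a \<in> topspace A \<Longrightarrow> f a \<in> topspace C"
  using continuous_f by (auto simp: continuous_map_def)

lemma m_in_topspace: "a \<in> topspace A \<Longrightarrow> m a \<in> topspace B"
  using continuous_m by (auto simp: continuous_map_def)

lemma topspace_disjoint_union_cases:
  assumes "z \<in> topspace disjoint_union"
  obtains (C) c where "c \<in> topspace C" "z = i1 c" | (B) b where "b \<in> topspace B" "z = i2 b"
  using assms topspace_disjoint_union by auto

lemma local_dist_triangle:
  assumes "x \<in> topspace disjoint_union" "y \<in> topspace disjoint_union" "z \<in> topspace disjoint_union"
  shows "local_dist x z \<le> local_dist x y + local_dist y z"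
  using assms
  by (cases rule: topspace_disjoint_union_cases[OF assms(1)];
      cases rule: topspace_disjoint_union_cases[OF assms(2)];
      cases rule: topspace_disjoint_union_cases[OF assms(3)])
     (auto intro: dC.dist_triangle dB.dist_triangle)

lemma anchor_in_topspace:
  "z \<in> topspace disjoint_union \<Longrightarrow> a \<in> topspace A \<Longrightarrow> anchor z a \<in> topspace disjoint_union"
  by (cases rule: topspace_disjoint_union_cases) (auto simp: topspace_disjoint_union f_in_topspace m_in_topspace)

lemma anchor_eq:
  assumes "z \<in> topspace disjoint_union" "w \<in> topspace disjoint_union" "local_dist z w \<noteq> top"
  shows "anchor z a = anchor w a"
  using assms
  by (cases rule: topspace_disjoint_union_cases[OF assms(1)];
      cases rule: topspace_disjoint_union_cases[OF assms(2)]) auto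

lemma local_dist_anchor_left:
  assumes x: "x \<in> topspace disjoint_union" and y: "y \<in> topspace disjoint_union" and a: "a \<in> topspace A"
  shows "local_dist x (anchor x a) \<le> local_dist x y + local_dist y (anchor y a)"
proof (cases "local_dist x y = top")
  case False
  then show ?thesis
    using anchor_eq[OF x y False] local_dist_triangle[OF x y anchor_in_topspace[OF y a]] by simp
qed simp

lemma local_dist_anchor_right:
  assumes y: "y \<in> topspace disjoint_union" and z: "z \<in> topspace disjoint_union" and a: "a \<in> topspace A"
  shows "local_dist (anchor z a) z \<le> local_dist (anchor y a) y + local_dist y z"
proof (cases "local_dist y z = top")
  case False
  then show ?thesis
    using anchor_eq[OF y z False] local_dist_triangle[OF anchor_in_topspace[OF y a] y z] by simp
qed simp

lemma dC_f_le_detour: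
  assumes y: "y \<in> topspace disjoint_union" and a: "a \<in> topspace A" "a' \<in> topspace A"
  shows "dC (f a) (f a') \<le> local_dist (anchor y a) y + local_dist y (anchor y a')"
  using y
proof (cases rule: topspace_disjoint_union_cases)
  case (C c)
  then show ?thesis
    using dC.dist_triangle f_in_topspace a by simp
next
  case (B b)
  then have "dB (m a) (m a') \<le> dB (m a) b + dB b (m a')"
    using dB.dist_triangle m_in_topspace a by simp
  then show ?thesis
    using f_le_m[OF a] B by simp
qed

lemma glue_dist_le_local: "glue_dist z w \<le> local_dist z w"
  by (simp add: glue_dist_eq_min)

lemma glue_dist_le_bridge: "p \<in> topspace A \<times> topspace A \<Longrightarrow> glue_dist z w \<le> bridge_dist z w p"
  unfolding glue_dist_def path_lengths_def by (rule Inf_lower) auto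

lemma bridge_dist_local_left:
  assumes "x \<in> topspace disjoint_union" "y \<in> topspace disjoint_union" "p \<in> topspace A \<times> topspace A"
  shows "bridge_dist x z p \<le> local_dist x y + bridge_dist y z p"
  using local_dist_anchor_left[of x y "fst p"] assms unfolding bridge_dist_def
  by (auto simp: add_right_mono add.assoc)

lemma bridge_dist_local_right:
  assumes "y \<in> topspace disjoint_union" "z \<in> topspace disjoint_union" "p \<in> topspace A \<times> topspace A"
  shows "bridge_dist x z p \<le> bridge_dist x y p + local_dist y z"
  using local_dist_anchor_right[of y z "snd p"] assms unfolding bridge_dist_def
  by (auto simp: add_left_mono add.assoc)

lemma bridge_dist_compose:
  assumes y: "y \<in> topspace disjoint_union"
    and a: "a1 \<in> topspace A" "a2 \<in> topspace A" "a3 \<in> topspace A" "a4 \<in> topspace A"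
  shows "bridge_dist x z (a1, a4) \<le> bridge_dist x y (a1, a2) + bridge_dist y z (a3, a4)"
proof -
  have "dC (f a1) (f a4) \<le> dC (f a1) (f a3) + dC (f a3) (f a4)"
    using dC.dist_triangle f_in_topspace a by blast
  also have "dC (f a1) (f a3) \<le> dC (f a1) (f a2) + dC (f a2) (f a3)"
    using dC.dist_triangle f_in_topspace a by blast
  also have "dC (f a2) (f a3) \<le> local_dist (anchor y a2) y + local_dist y (anchor y a3)"
    using dC_f_le_detour[OF y a(2,3)] .
  finally have "dC (f a1) (f a4) \<le>
      dC (f a1) (f a2) + (local_dist (anchor y a2) y + local_dist y (anchor y a3)) + dC (f a3) (f a4)"
    by (simp add: add_mono)
  then have "bridge_dist x z (a1, a4) \<le> local_dist x (anchor x a1) +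
      (dC (f a1) (f a2) + (local_dist (anchor y a2) y + local_dist y (anchor y a3)) + dC (f a3) (f a4)) +
      local_dist (anchor z a4) z"
    unfolding bridge_dist_def by (simp add: add_mono)
  also have "\<dots> = bridge_dist x y (a1, a2) + bridge_dist y z (a3, a4)"
    unfolding bridge_dist_def by (simp add: ac_simps)
  finally show ?thesis .
qed

lemma path_lengths_compose:
  assumes x: "x \<in> topspace disjoint_union" and y: "y \<in> topspace disjoint_union"
    and z: "z \<in> topspace disjoint_union"
  shows "u \<in> path_lengths x y \<Longrightarrow> v \<in> path_lengths y z \<Longrightarrow> glue_dist x z \<le> u + v"
  unfolding path_lengths_def
proof (elim insertE imageE; clarify)
  show "glue_dist x z \<le> local_dist x y + local_dist y z"
    using glue_dist_le_local local_dist_triangle[OF x y z] by (rule order.trans)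
next
  fix a a' assume "a \<in> topspace A" "a' \<in> topspace A"
  then show "glue_dist x z \<le> local_dist x y + bridge_dist y z (a, a')"
    by (intro order.trans[OF glue_dist_le_bridge bridge_dist_local_left[OF x y]]) auto
next
  fix a a' assume "a \<in> topspace A" "a' \<in> topspace A"
  then show "glue_dist x z \<le> bridge_dist x y (a, a') + local_dist y z"
    by (intro order.trans[OF glue_dist_le_bridge bridge_dist_local_right[OF y z]]) auto
next
  fix a1 a2 a3 a4
  assume "a1 \<in> topspace A" "a2 \<in> topspace A" "a3 \<in> topspace A" "a4 \<in> topspace A"
  then show "glue_dist x z \<le> bridge_dist x y (a1, a2) + bridge_dist y z (a3, a4)"
    by (intro order.trans[OF glue_dist_le_bridge[of "(a1, a4)"] bridge_dist_compose[OF y]]) auto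
qed

lemma glue_dist_triangle:
  "x \<in> topspace disjoint_union \<Longrightarrow> y \<in> topspace disjoint_union \<Longrightarrow> z \<in> topspace disjoint_union \<Longrightarrow>
    glue_dist x z \<le> glue_dist x y + glue_dist y z"
  unfolding glue_dist_def[of x y] glue_dist_def[of y z]
  by (rule ennreal_le_Inf_add_Inf) (rule path_lengths_compose)

lemma glue_dist_refl: "x \<in> topspace disjoint_union \<Longrightarrow> glue_dist x x = 0"
  by (cases rule: topspace_disjoint_union_cases)
     (auto simp: glue_dist_eq_min dC.dist_refl dB.dist_refl)

lemma lsc_local_dist: "lsc_map (prod_topology disjoint_union disjoint_union) (\<lambda>z. local_dist (fst z) (snd z))"
proof (rule lsc_map_disjoint_union_left)
  have "lsc_map (prod_topology C C) (\<lambda>z. local_dist (i1 (fst z)) (i1 (snd z)))"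
    using dC.lsc_dist by simp
  moreover have "lsc_map (prod_topology C B) (\<lambda>z. local_dist (i1 (fst z)) (i2 (snd z)))"
    using lsc_map_const[of _ top] by simp
  ultimately show "lsc_map (prod_topology C disjoint_union) (\<lambda>z. local_dist (i1 (fst z)) (snd z))"
    using lsc_map_disjoint_union_right[where \<phi>="\<lambda>c w. local_dist (i1 c) w"] by simp
next
  have "lsc_map (prod_topology B C) (\<lambda>z. local_dist (i2 (fst z)) (i1 (snd z)))"
    using lsc_map_const[of _ top] by simp
  moreover have "lsc_map (prod_topology B B) (\<lambda>z. local_dist (i2 (fst z)) (i2 (snd z)))"
    using dB.lsc_dist by simp
  ultimately show "lsc_map (prod_topology B disjoint_union) (\<lambda>z. local_dist (i2 (fst z)) (snd z))"
    using lsc_map_disjoint_union_right[where \<phi>="\<lambda>b w. local_dist (i2 b) w"] by simp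
qed

lemma lsc_bridge_dist:
  "lsc_map (prod_topology (prod_topology disjoint_union disjoint_union) (prod_topology A A))
     (\<lambda>r. bridge_dist (fst (fst r)) (snd (fst r)) (snd r))"
proof -
  have "lsc_map (prod_topology C A) (\<lambda>z. dC (fst z) (f (snd z)))"
    "lsc_map (prod_topology B A) (\<lambda>z. dB (fst z) (m (snd z)))"
    by (intro dC.lsc_dist_compose dB.lsc_dist_compose continuous_map_fst
          continuous_map_snd_compose continuous_f continuous_m)+
  then have start: "lsc_map (prod_topology disjoint_union A) (\<lambda>z. local_dist (fst z) (anchor (fst z) (snd z)))"
    using lsc_map_disjoint_union_left[where \<phi>="\<lambda>z a. local_dist z (anchor z a)"] by simp
  have "lsc_map (prod_topology A C) (\<lambda>z. dC (f (fst z)) (snd z))"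
    "lsc_map (prod_topology A B) (\<lambda>z. dB (m (fst z)) (snd z))"
    by (intro dC.lsc_dist_compose dB.lsc_dist_compose continuous_map_snd
          continuous_map_fst_compose continuous_f continuous_m)+
  then have finish: "lsc_map (prod_topology A disjoint_union) (\<lambda>z. local_dist (anchor (snd z) (fst z)) (snd z))"
    using lsc_map_disjoint_union_right[where \<phi>="\<lambda>a w. local_dist (anchor w a) w"] by simp
  have middle: "lsc_map (prod_topology A A) (\<lambda>z. dC (f (fst z)) (f (snd z)))"
    by (intro dC.lsc_dist_compose continuous_map_fst_compose continuous_map_snd_compose continuous_f)
  let ?R = "prod_topology (prod_topology disjoint_union disjoint_union) (prod_topology A A)"
  have "continuous_map ?R (prod_topology disjoint_union A) (\<lambda>r. (fst (fst r), fst (snd r)))"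
    "continuous_map ?R (prod_topology A disjoint_union) (\<lambda>r. (snd (snd r), snd (fst r)))"
    by (intro continuous_map_pairedI continuous_map_fst_compose continuous_map_snd_compose
          continuous_map_fst continuous_map_snd)+
  from lsc_map_add[OF lsc_map_add[OF lsc_map_compose[OF this(1) start]
          lsc_map_compose[OF continuous_map_snd middle]] lsc_map_compose[OF this(2) finish]]
  show ?thesis
    unfolding bridge_dist_def by simp
qed

lemma compactin_topspace_AA: "compactin (prod_topology A A) (topspace A \<times> topspace A)"
  using compact_A compact_space_prod_topology[of A A] by (simp add: compact_space_def)

lemma lsc_glue_dist: "lsc_map (prod_topology disjoint_union disjoint_union) (\<lambda>z. glue_dist (fst z) (snd z))"
  unfolding glue_dist_eq_min
  by (intro lsc_map_min lsc_local_dist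
        lsc_map_INF_compact[where \<Phi>="\<lambda>q p. bridge_dist (fst q) (snd q) p", OF _ compactin_topspace_AA])
     (simp add: lsc_bridge_dist)

lemma MetCH_glue_dist: "MetCH disjoint_union glue_dist"
  by unfold_locales
     (use compact_disjoint_union Hausdorff_disjoint_union dC.compact dB.compact dC.Hausdorff dB.Hausdorff
        glue_dist_refl glue_dist_triangle lsc_glue_dist in auto)

sublocale glued: MetCH disjoint_union glue_dist
  by (rule MetCH_glue_dist)

lemma glue_dist_i1:
  assumes c: "c \<in> topspace C" and c': "c' \<in> topspace C"
  shows "glue_dist (i1 c) (i1 c') = dC c c'"
proof (rule antisym)
  show "glue_dist (i1 c) (i1 c') \<le> dC c c'"
    using glue_dist_le_local[of "i1 c" "i1 c'"] by simp
  have "dC c c' \<le> bridge_dist (i1 c) (i1 c') (a, a')" if "a \<in> topspace A" "a' \<in> topspace A" for a a'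
  proof -
    have "dC c c' \<le> dC c (f a) + dC (f a) c'"
      using dC.dist_triangle c c' f_in_topspace that by blast
    also have "dC (f a) c' \<le> dC (f a) (f a') + dC (f a') c'"
      using dC.dist_triangle c' f_in_topspace that by blast
    finally show ?thesis
      unfolding bridge_dist_def by (simp add: add_mono ac_simps)
  qed
  then show "dC c c' \<le> glue_dist (i1 c) (i1 c')"
    unfolding glue_dist_def path_lengths_def by (auto intro: Inf_greatest)
qed

lemma glue_dist_m_f:
  assumes a: "a \<in> topspace A"
  shows "glue_dist (i2 (m a)) (i1 (f a)) = 0" "glue_dist (i1 (f a)) (i2 (m a)) = 0"
proof -
  have "bridge_dist (i2 (m a)) (i1 (f a)) (a, a) = 0" "bridge_dist (i1 (f a)) (i2 (m a)) (a, a) = 0"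
    unfolding bridge_dist_def using a dC.dist_refl dB.dist_refl f_in_topspace m_in_topspace by simp_all
  moreover have "glue_dist (i2 (m a)) (i1 (f a)) \<le> bridge_dist (i2 (m a)) (i1 (f a)) (a, a)"
    "glue_dist (i1 (f a)) (i2 (m a)) \<le> bridge_dist (i1 (f a)) (i2 (m a)) (a, a)"
    using a by (simp_all add: glue_dist_le_bridge)
  ultimately show "glue_dist (i2 (m a)) (i1 (f a)) = 0" "glue_dist (i1 (f a)) (i2 (m a)) = 0"
    by simp_all
qed

text \<open>A zero distance between the summands is realised by a single crossing, because an lsc
  function on the compact space \<open>A \<times> A\<close> that is everywhere positive has a positive infimum.\<close>

lemma glue_dist_i1_i2_eq_0D:
  assumes c: "c \<in> topspace C" and b: "b \<in> topspace B" and zero: "glue_dist (i1 c) (i2 b) = 0"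
  shows "\<exists>a\<in>topspace A. \<exists>a'\<in>topspace A. dC c (f a) = 0 \<and> dC (f a) (f a') = 0 \<and> dB (m a') b = 0"
proof (rule ccontr)
  assume "\<not> ?thesis"
  then have pos: "0 < bridge_dist (i1 c) (i2 b) p" if "p \<in> topspace A \<times> topspace A" for p
    using that by (auto simp: bridge_dist_def zero_less_iff_neq_zero)
  have "lsc_map (prod_topology A A) (\<lambda>p. dC c (f (fst p)) + dC (f (fst p)) (f (snd p)) + dB (m (snd p)) b)"
    by (intro lsc_map_add dC.lsc_dist_compose dB.lsc_dist_compose continuous_map_const[THEN iffD2]
          continuous_map_fst_compose continuous_map_snd_compose continuous_f continuous_m disjI2 c b)
  then have "lsc_map (prod_topology A A) (bridge_dist (i1 c) (i2 b))"
    by (rule lsc_map_cong) (auto simp: bridge_dist_def)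
  then have "0 < (INF p\<in>topspace A \<times> topspace A. bridge_dist (i1 c) (i2 b) p)"
    using INF_compact_pos compactin_topspace_AA pos by blast
  then show False
    using zero by (simp add: glue_dist_eq_min)
qed

definition glue_C :: "'c \<Rightarrow> 'z" where
  "glue_C c = glued.rep (i1 c)"

definition glue_B :: "'b \<Rightarrow> 'z" where
  "glue_B b = glued.rep (i2 b)"

lemma glue_dist_glue_C:
  "c \<in> topspace C \<Longrightarrow> c' \<in> topspace C \<Longrightarrow> glue_dist (glue_C c) (glue_C c') = dC c c'"
  unfolding glue_C_def by (simp add: glued.dist_rep topspace_disjoint_union glue_dist_i1)

lemma mor_glue_C: "mor C dC glued.separated_quotient glue_dist glue_C"
  unfolding mor_def
proof (intro conjI ballI)
  show "continuous_map C glued.separated_quotient glue_C"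
    using continuous_map_compose[OF continuous_map_i1 glued.continuous_map_rep]
    by (simp add: glue_C_def[abs_def] o_def)
qed (simp add: glue_dist_glue_C)

lemma mor_glue_B: "mor B dB glued.separated_quotient glue_dist glue_B"
  unfolding mor_def
proof (intro conjI ballI)
  show "continuous_map B glued.separated_quotient glue_B"
    using continuous_map_compose[OF continuous_map_i2 glued.continuous_map_rep]
    by (simp add: glue_B_def[abs_def] o_def)
  fix b b' assume "b \<in> topspace B" "b' \<in> topspace B"
  then show "glue_dist (glue_B b) (glue_B b') \<le> dB b b'"
    using glue_dist_le_local[of "i2 b" "i2 b'"]
    by (simp add: glue_B_def glued.dist_rep topspace_disjoint_union)
qed

lemma glue_B_m_eq_glue_C_f: "a \<in> topspace A \<Longrightarrow> glue_B (m a) = glue_C (f a)"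
  unfolding glue_B_def glue_C_def
  by (subst glued.rep_eq_iff)
     (auto simp: topspace_disjoint_union glued.indist_def glue_dist_m_f f_in_topspace m_in_topspace)

lemma glue_B_eq_glue_C_D:
  assumes c: "c \<in> topspace C" and b: "b \<in> topspace B" and eq: "glue_B b = glue_C c"
  shows "\<exists>a\<in>topspace A. \<exists>a'\<in>topspace A. dC c (f a) = 0 \<and> dC (f a) (f a') = 0 \<and> dB (m a') b = 0"
proof -
  have "glued.indist (i2 b) (i1 c)"
    using eq glued.rep_eq_iff b c by (simp add: glue_B_def glue_C_def topspace_disjoint_union)
  then show ?thesis
    using glue_dist_i1_i2_eq_0D c b by (simp add: glued.indist_def)
qed

end

section \<open>Equalizers are isometric embeddings\<close>

definition isometric :: "'a topology \<Rightarrow> ('a \<Rightarrow> 'a \<Rightarrow> ennreal) \<Rightarrow> ('b \<Rightarrow> 'b \<Rightarrow> ennreal) \<Rightarrow> ('a \<Rightarrow> 'b) \<Rightarrow> bool" where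
  "isometric X dX dY f \<longleftrightarrow> (\<forall>x\<in>topspace X. \<forall>y\<in>topspace X. dY (f x) (f y) = dX x y)"

lemma isometric_inj_on:
  assumes "MetCH_sep X dX" "isometric X dX dY f"
  shows "inj_on f (topspace X)"
proof (rule inj_onI)
  fix x y assume xy: "x \<in> topspace X" "y \<in> topspace X" "f x = f y"
  have "dX x y = dY (f x) (f y)" "dX y x = dY (f y) (f x)" "dX x x = dY (f x) (f x)"
    using assms(2) xy(1,2) unfolding isometric_def by auto
  moreover have "dX x x = 0"
    using MetCH.dist_refl[OF MetCH_sep_imp_MetCH[OF assms(1)] xy(1)] .
  ultimately show "x = y"
    using MetCH_sep_separated[OF assms(1) xy(1,2)] xy(3) by simp
qed

lemma mor_isometricI:
  assumes "mor X dX Y dY f" "\<And>x y. x \<in> topspace X \<Longrightarrow> y \<in> topspace X \<Longrightarrow> dX x y \<le> dY (f x) (f y)"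
  shows "isometric X dX dY f"
  using assms unfolding mor_def isometric_def by (auto intro: antisym)

lemma MetCH_sep_discrete:
  assumes "finite T" "\<And>x. x \<in> T \<Longrightarrow> d x x = 0"
    "\<And>x y z. x \<in> T \<Longrightarrow> y \<in> T \<Longrightarrow> z \<in> T \<Longrightarrow> d x z \<le> d x y + d y z"
    "\<And>x y. x \<in> T \<Longrightarrow> y \<in> T \<Longrightarrow> d x y = 0 \<Longrightarrow> d y x = 0 \<Longrightarrow> x = y"
  shows "MetCH_sep (discrete_topology T) d"
  unfolding MetCH_sep_def
  using assms by (auto simp: compact_space_discrete_topology prod_topology_discrete_topology[symmetric])

text \<open>Finitely many points of the image of \<open>m\<close>, tagged by \<open>Inr\<close> so as to live in the
  sum type against which the universal property of an equalizer is tested.\<close>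

lemma equalizer_test_object:
  assumes B: "MetCH_sep B dB" and m: "mor A dA B dB m"
    and pq: "\<And>a. a \<in> topspace A \<Longrightarrow> p (m a) = q (m a)"
    and T: "finite T" "T \<subseteq> m ` topspace A"
  shows "MetCH_sep (discrete_topology (Inr ` T)) (\<lambda>x y. dB (projr x) (projr y))"
    and "mor (discrete_topology (Inr ` T)) (\<lambda>x y. dB (projr x) (projr y)) B dB projr"
    and "\<forall>x\<in>topspace (discrete_topology (Inr ` T)). p (projr x) = q (projr x)"
proof -
  interpret B: MetCH B dB
    using B by (rule MetCH_sep_imp_MetCH)
  have TB: "T \<subseteq> topspace B"
    using T(2) m by (auto simp: mor_def continuous_map_def)
  then show "MetCH_sep (discrete_topology (Inr ` T)) (\<lambda>x y. dB (projr x) (projr y))"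
    using T(1) B.dist_refl B.dist_triangle MetCH_sep_separated[OF B]
    by (intro MetCH_sep_discrete) (auto simp: subset_iff)
  show "mor (discrete_topology (Inr ` T)) (\<lambda>x y. dB (projr x) (projr y)) B dB projr"
    using TB unfolding mor_def by auto
  show "\<forall>x\<in>topspace (discrete_topology (Inr ` T)). p (projr x) = q (projr x)"
    using T(2) pq by auto
qed

lemma is_equalizerD:
  assumes "is_equalizer TYPE('w) A dA B dB E dE m p q"
  shows "mor A dA B dB m"
    and "\<And>(W :: 'w topology) dW w. MetCH_sep W dW \<Longrightarrow> mor W dW B dB w \<Longrightarrow>
           (\<forall>x\<in>topspace W. p (w x) = q (w x)) \<Longrightarrow> \<exists>v. mor W dW A dA v \<and> (\<forall>x\<in>topspace W. m (v x) = w x)"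
    and "\<And>(W :: 'w topology) dW w v v' x. MetCH_sep W dW \<Longrightarrow> mor W dW B dB w \<Longrightarrow>
           (\<forall>x\<in>topspace W. p (w x) = q (w x)) \<Longrightarrow>
           mor W dW A dA v \<Longrightarrow> (\<forall>x\<in>topspace W. m (v x) = w x) \<Longrightarrow>
           mor W dW A dA v' \<Longrightarrow> (\<forall>x\<in>topspace W. m (v' x) = w x) \<Longrightarrow> x \<in> topspace W \<Longrightarrow> v x = v' x"
    and "\<And>a. a \<in> topspace A \<Longrightarrow> p (m a) = q (m a)"
proof -
  note eq = assms[unfolded is_equalizer_def]
  show "mor A dA B dB m" "\<And>a. a \<in> topspace A \<Longrightarrow> p (m a) = q (m a)"
    using eq by simp_all
  note univ = eq[THEN conjunct2, THEN conjunct2, THEN conjunct2, THEN conjunct2,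
      rule_format, OF conjI, OF _ conjI]
  show "\<exists>v. mor W dW A dA v \<and> (\<forall>x\<in>topspace W. m (v x) = w x)"
    if "MetCH_sep W dW" "mor W dW B dB w" "\<forall>x\<in>topspace W. p (w x) = q (w x)"
    for W :: "'w topology" and dW w
    using univ[OF that] by (rule conjunct1)
  show "v x = v' x"
    if "MetCH_sep W dW" "mor W dW B dB w" "\<forall>x\<in>topspace W. p (w x) = q (w x)"
      "mor W dW A dA v" "\<forall>x\<in>topspace W. m (v x) = w x"
      "mor W dW A dA v'" "\<forall>x\<in>topspace W. m (v' x) = w x" "x \<in> topspace W"
    for W :: "'w topology" and dW w v v' x
    using univ[OF that(1-3), THEN conjunct2, rule_format,
        OF conjI, OF that(4) conjI, OF that(5) conjI, OF that(6,7,8)] .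
qed

lemma equalizer_inj_on:
  fixes A :: "'a topology" and B :: "'b topology"
  assumes A: "MetCH_sep A dA" and B: "MetCH_sep B dB"
    and eq: "is_equalizer TYPE('a + 'b) A dA B dB E dE m p q"
  shows "inj_on m (topspace A)"
proof (rule inj_onI)
  fix a1 a2 assume a: "a1 \<in> topspace A" "a2 \<in> topspace A" "m a1 = m a2"
  let ?W = "discrete_topology (Inr ` {m a1}) :: ('a + 'b) topology"
  let ?dW = "\<lambda>x y. dB (projr x) (projr y)"
  have W: "MetCH_sep ?W ?dW" "mor ?W ?dW B dB projr" "\<forall>x\<in>topspace ?W. p (projr x) = q (projr x)"
    using equalizer_test_object[where p = p and q = q and T = "{m a1}", OF B is_equalizerD(1,4)[OF eq]] a(1)
    by auto
  have "mor ?W ?dW A dA (\<lambda>x. a1)" "mor ?W ?dW A dA (\<lambda>x. a2)"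
    using a MetCH.dist_refl[OF MetCH_sep_imp_MetCH[OF A]] unfolding mor_def by auto
  moreover have "\<forall>x\<in>topspace ?W. m a1 = projr x" "\<forall>x\<in>topspace ?W. m a2 = projr x"
    using a by auto
  ultimately have "(\<lambda>x. a1) (Inr (m a1)) = (\<lambda>x. a2) (Inr (m a1))"
    by (intro is_equalizerD(3)[OF eq W]) auto
  then show "a1 = a2"
    by simp
qed

lemma equalizer_isometric:
  fixes A :: "'a topology" and B :: "'b topology"
  assumes A: "MetCH_sep A dA" and B: "MetCH_sep B dB"
    and eq: "is_equalizer TYPE('a + 'b) A dA B dB E dE m p q"
  shows "isometric A dA dB m"
proof (rule mor_isometricI[OF is_equalizerD(1)[OF eq]])
  fix a1 a2 assume a: "a1 \<in> topspace A" "a2 \<in> topspace A"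
  let ?W = "discrete_topology (Inr ` {m a1, m a2}) :: ('a + 'b) topology"
  let ?dW = "\<lambda>x y. dB (projr x) (projr y)"
  have W: "MetCH_sep ?W ?dW" "mor ?W ?dW B dB projr" "\<forall>x\<in>topspace ?W. p (projr x) = q (projr x)"
    using equalizer_test_object[where p = p and q = q and T = "{m a1, m a2}", OF B is_equalizerD(1,4)[OF eq]] a
    by auto
  obtain v where v: "mor ?W ?dW A dA v" "\<forall>x\<in>topspace ?W. m (v x) = projr x"
    using is_equalizerD(2)[OF eq W] by blast
  have "v x \<in> topspace A" if "x \<in> topspace ?W" for x
    using v(1) continuous_map_image_subset_topspace that unfolding mor_def by blast
  then have v_m: "v (Inr (m a1)) = a1" "v (Inr (m a2)) = a2"
    using inj_onD[OF equalizer_inj_on[OF A B eq]] v(2) a by simp_all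
  have "\<forall>x\<in>topspace ?W. \<forall>y\<in>topspace ?W. dA (v x) (v y) \<le> ?dW x y"
    using v(1) unfolding mor_def by (rule conjunct2)
  from this[rule_format, of "Inr (m a1)" "Inr (m a2)"]
  show "dA a1 a2 \<le> dB (m a1) (m a2)"
    by (simp add: v_m)
qed

section \<open>Pushouts and equalizers of isometric embeddings\<close>

lemma is_pushoutD:
  assumes "is_pushout TYPE('z) A dA B dB C dC D dD m f g n"
  shows "mor A dA B dB m" "mor A dA C dC f" "mor C dC D dD n"
    and "\<And>(Z :: 'z topology) dZ h k. MetCH_sep Z dZ \<Longrightarrow> mor B dB Z dZ h \<Longrightarrow> mor C dC Z dZ k \<Longrightarrow>
           (\<forall>a\<in>topspace A. h (m a) = k (f a)) \<Longrightarrow>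
           \<exists>u. mor D dD Z dZ u \<and> (\<forall>b\<in>topspace B. u (g b) = h b) \<and> (\<forall>c\<in>topspace C. u (n c) = k c)"
proof -
  note po = assms[unfolded is_pushout_def]
  show "mor A dA B dB m" "mor A dA C dC f" "mor C dC D dD n"
    using po by simp_all
  note univ = po[THEN conjunct2, THEN conjunct2, THEN conjunct2, THEN conjunct2, THEN conjunct2,
      rule_format, OF conjI, OF _ conjI, OF _ _ conjI]
  show "\<exists>u. mor D dD Z dZ u \<and> (\<forall>b\<in>topspace B. u (g b) = h b) \<and> (\<forall>c\<in>topspace C. u (n c) = k c)"
    if "MetCH_sep Z dZ" "mor B dB Z dZ h" "mor C dC Z dZ k" "\<forall>a\<in>topspace A. h (m a) = k (f a)"
    for Z :: "'z topology" and dZ h k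
    using univ[OF that] by (rule conjunct1)
qed

lemma pushout_isometric:
  fixes A :: "'a topology" and B :: "'b topology" and C :: "'c topology" and D :: "'d topology"
  assumes A: "MetCH_sep A dA" and B: "MetCH_sep B dB" and C: "MetCH_sep C dC"
    and m_iso: "isometric A dA dB m"
    and po: "is_pushout TYPE(('b + 'c) + 'd) A dA B dB C dC D dD m f g n"
  shows "isometric C dC dD n"
proof -
  have m: "mor A dA B dB m" and f: "mor A dA C dC f" and n: "mor C dC D dD n"
    using is_pushoutD(1-3)[OF po] .
  interpret G: metric_gluing "\<lambda>c. Inl (Inr c) :: ('b + 'c) + 'd" C "\<lambda>b. Inl (Inl b)" B dC dB A f m
  proof (intro metric_gluing.intro binary_sum.intro metric_gluing_axioms.intro)
    show "dC (f a) (f a') \<le> dB (m a) (m a')" if "a \<in> topspace A" "a' \<in> topspace A" for a a'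
      using f m_iso that unfolding mor_def isometric_def by simp
  qed (use A B C f m in \<open>auto simp: inj_def MetCH_sep_imp_MetCH MetCH_sep_def mor_def\<close>)
  obtain u where u: "mor D dD G.glued.separated_quotient G.glue_dist u"
      "\<forall>c\<in>topspace C. u (n c) = G.glue_C c"
    using is_pushoutD(4)[OF po G.glued.MetCH_sep_separated_quotient G.mor_glue_B G.mor_glue_C]
      G.glue_B_m_eq_glue_C_f by blast
  show ?thesis
  proof (rule mor_isometricI[OF n])
    fix c c' assume c: "c \<in> topspace C" "c' \<in> topspace C"
    then have "n c \<in> topspace D" "n c' \<in> topspace D"
      using n by (auto simp: mor_def continuous_map_def)
    then have "G.glue_dist (u (n c)) (u (n c')) \<le> dD (n c) (n c')"
      using u(1) unfolding mor_def by blast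
    then show "dC c c' \<le> dD (n c) (n c')"
      using u(2) c G.glue_dist_glue_C by simp
  qed
qed

lemma isometric_factor:
  assumes C: "MetCH_sep C dC" and D: "MetCH_sep D dD" and n_iso: "isometric C dC dD n"
    and n: "mor C dC D dD n" and w: "mor W dW D dD w"
    and w_image: "\<And>x. x \<in> topspace W \<Longrightarrow> w x \<in> n ` topspace C"
  obtains v where "mor W dW C dC v" "\<And>x. x \<in> topspace W \<Longrightarrow> n (v x) = w x"
proof -
  have "embedding_map C D n"
    using n isometric_inj_on[OF C n_iso] C D
    by (intro continuous_imp_embedding_map) (auto simp: mor_def MetCH_sep_def)
  then obtain n' where n': "homeomorphic_maps C (subtopology D (n ` topspace C)) n n'"
    unfolding embedding_map_def homeomorphic_map_maps by blast
  have "continuous_map W (subtopology D (n ` topspace C)) w"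
    using w w_image by (auto simp: mor_def continuous_map_in_subtopology)
  then have cont: "continuous_map W C (\<lambda>x. n' (w x))"
    using continuous_map_compose n' unfolding homeomorphic_maps_def o_def by fastforce
  have n_n': "n (n' (w x)) = w x" if "x \<in> topspace W" for x
    using n' w_image[OF that] unfolding homeomorphic_maps_def by auto
  have "dC (n' (w x)) (n' (w y)) \<le> dW x y" if xy: "x \<in> topspace W" "y \<in> topspace W" for x y
  proof -
    have "n' (w x) \<in> topspace C" "n' (w y) \<in> topspace C"
      using cont xy by (auto simp: continuous_map_def)
    then have "dC (n' (w x)) (n' (w y)) = dD (n (n' (w x))) (n (n' (w y)))"
      using n_iso unfolding isometric_def by simp
    also have "\<dots> = dD (w x) (w y)"
      using n_n' xy by simp
    also have "\<dots> \<le> dW x y"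
      using w xy unfolding mor_def by blast
    finally show ?thesis .
  qed
  then show ?thesis
    using that[of "\<lambda>x. n' (w x)"] cont n_n' unfolding mor_def by blast
qed

lemma isometric_imp_equalizer:
  fixes C :: "'c topology" and D :: "'d topology"
  assumes C: "MetCH_sep C dC" and D: "MetCH_sep D dD"
    and n: "mor C dC D dD n" and n_iso: "isometric C dC dD n"
  shows "\<exists>(F :: ('d + 'd) topology) dF p q. MetCH_sep F dF \<and> is_equalizer TYPE('w) C dC D dD F dF n p q"
proof -
  \<comment> \<open>the cokernel pair of \<open>n\<close>: two copies of \<open>D\<close> glued along \<open>n\<close>\<close>
  interpret G: metric_gluing Inl D Inr D dD dD C n n
    by (intro metric_gluing.intro binary_sum.intro metric_gluing_axioms.intro)
       (use C D n in \<open>auto simp: MetCH_sep_imp_MetCH MetCH_sep_def mor_def\<close>)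
  have nD: "n c \<in> topspace D" if "c \<in> topspace C" for c
    using n that by (auto simp: mor_def continuous_map_def)
  have in_image: "y \<in> n ` topspace C" if y: "y \<in> topspace D" "G.glue_C y = G.glue_B y" for y
  proof -
    obtain a a' where a: "a \<in> topspace C" "a' \<in> topspace C"
      and zero: "dD y (n a) = 0" "dD (n a) (n a') = 0" "dD (n a') y = 0"
      using G.glue_B_eq_glue_C_D[OF y(1) y(1) y(2)[symmetric]] by blast
    have "dD (n a) y \<le> dD (n a) (n a') + dD (n a') y"
      using MetCH.dist_triangle[OF MetCH_sep_imp_MetCH[OF D]] nD a y by blast
    then have "y = n a"
      using MetCH_sep_separated[OF D y(1) nD[OF a(1)]] zero by simp
    then show ?thesis
      using a by blast
  qed
  have "is_equalizer TYPE('w) C dC D dD G.glued.separated_quotient G.glue_dist n G.glue_C G.glue_B"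
    unfolding is_equalizer_def
  proof (intro conjI ballI allI impI; (elim conjE)?)
    fix W :: "'w topology" and dW w
    assume w: "mor W dW D dD w" and eq: "\<forall>x\<in>topspace W. G.glue_C (w x) = G.glue_B (w x)"
    have "w x \<in> n ` topspace C" if "x \<in> topspace W" for x
      using in_image w eq that by (auto simp: mor_def continuous_map_def)
    then obtain v where "mor W dW C dC v" "\<And>x. x \<in> topspace W \<Longrightarrow> n (v x) = w x"
      using isometric_factor[OF C D n_iso n w] by blast
    then show "\<exists>v. mor W dW C dC v \<and> (\<forall>x\<in>topspace W. n (v x) = w x)"
      by blast
  next
    fix W :: "'w topology" and dW w v v' x
    assume "mor W dW C dC v" "\<forall>x\<in>topspace W. n (v x) = w x"
      "mor W dW C dC v'" "\<forall>x\<in>topspace W. n (v' x) = w x" "x \<in> topspace W"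
    moreover from this have "v x \<in> topspace C" "v' x \<in> topspace C"
      by (auto simp: mor_def continuous_map_def)
    ultimately show "v x = v' x"
      using inj_onD[OF isometric_inj_on[OF C n_iso]] by simp
  qed (use n G.mor_glue_C G.mor_glue_B G.glue_B_m_eq_glue_C_f in auto)
  then show ?thesis
    using G.glued.MetCH_sep_separated_quotient by blast
qed

theorem corollary4p7:
  fixes A :: "'a topology" and dA :: "'a \<Rightarrow> 'a \<Rightarrow> ennreal"
    and B :: "'b topology" and dB :: "'b \<Rightarrow> 'b \<Rightarrow> ennreal"
    and C :: "'c topology" and dC :: "'c \<Rightarrow> 'c \<Rightarrow> ennreal"
    and D :: "'d topology" and dD :: "'d \<Rightarrow> 'd \<Rightarrow> ennreal"
    and E :: "'e topology" and dE :: "'e \<Rightarrow> 'e \<Rightarrow> ennreal"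
    and m :: "'a \<Rightarrow> 'b" and p :: "'b \<Rightarrow> 'e" and q :: "'b \<Rightarrow> 'e"
    and f :: "'a \<Rightarrow> 'c" and g :: "'b \<Rightarrow> 'd" and n :: "'c \<Rightarrow> 'd"
  assumes "MetCH_sep A dA" and "MetCH_sep B dB" and "MetCH_sep C dC"
    and "MetCH_sep D dD" and "MetCH_sep E dE"
    and "is_equalizer TYPE('a + 'b) A dA B dB E dE m p q"
    and "mor A dA C dC f"
    and "is_pushout TYPE(('b + 'c) + 'd) A dA B dB C dC D dD m f g n"
  shows "\<exists>(F :: ('d + 'd) topology) dF p' q'. MetCH_sep F dF \<and>
           is_equalizer TYPE('w) C dC D dD F dF n p' q'"
proof -
  have "isometric A dA dB m"
    using equalizer_isometric assms(1,2,6) .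
  then have "isometric C dC dD n"
    using pushout_isometric assms(1-3,8) by blast
  moreover have "mor C dC D dD n"
    using is_pushoutD(3)[OF assms(8)] .
  ultimately show ?thesis
    using isometric_imp_equalizer[OF assms(3,4)] by blast
qed

end
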